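(* Let $\Gamma$ be a finite marked graph with vertex set $V(\Gamma)=V_1\sqcup V_2$, and let $\Gamma_1,\Gamma_2$ be the induced subgraphs on $V_1,V_2$. Assume $h_1(\Gamma)=h_1(\Gamma_1)+h_1(\Gamma_2)$, where $h_1$ denotes the rank of the first homology group of a graph (viewed as a $1$-dimensional complex). Then $$\det\Gamma=\det\Gamma_1\cdot\det\Gamma_2+\sum_{k\ge1}\ \sum_{\{(u_1,v_1),\dots,(u_k,v_k)\}}(-1)^k\det(\Gamma_1-u_1-\dots-u_k)\cdot\det(\Gamma_2-v_1-\dots-v_k),$$ where the inner sum runs over all sets of $k$ pairwise vertex-disjoint edges $(u_i,v_i)$ of $\Gamma$ with $u_i\in V_1$, $v_i\in V_2$.
   Context: A marked graph is a finite graph without loops (multiple edges allowed) in which each vertex $v$ carries a real number $n_v$ (its mark). Its determinant $\det\Gamma$ is the determinant of the $V\times V$ matrix $M$ with $M_{vv}=n_v$ and $M_{uv}=-(\text{number of edges between }u\text{ and }v)$ for $u\ne v$. The determinant of the empty graph is $1$. For vertices $u_1,\dots,u_k$, $\Gamma-u_1-\dots-u_k$ denotes the induced subgraph on the remaining vertices. *)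

theory Defs
  imports Complex_Main "HOL-Combinatorics.Permutations"
begin

text \<open>A finite marked multigraph without loops: vertex set V (type 'a), edge set E
  (type 'e, so parallel edges are distinct elements), each edge e has a 2-element set of
  endpoints ends e, and each vertex v has a real mark n v.\<close>

definition marked_graph :: "'a set \<Rightarrow> 'e set \<Rightarrow> ('e \<Rightarrow> 'a set) \<Rightarrow> bool" where
  "marked_graph V E ends \<longleftrightarrow> finite V \<and> finite E \<and>
     (\<forall>e\<in>E. ends e \<subseteq> V \<and> card (ends e) = 2)"

definition ind_edges :: "'e set \<Rightarrow> ('e \<Rightarrow> 'a set) \<Rightarrow> 'a set \<Rightarrow> 'e set" where
  "ind_edges E ends S = {e\<in>E. ends e \<subseteq> S}"

definition n_edges :: "'e set \<Rightarrow> ('e \<Rightarrow> 'a set) \<Rightarrow> 'a \<Rightarrow> 'a \<Rightarrow> nat" where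
  "n_edges E ends u v = card {e\<in>E. ends e = {u, v}}"

definition mg_matrix :: "('a \<Rightarrow> real) \<Rightarrow> 'e set \<Rightarrow> ('e \<Rightarrow> 'a set) \<Rightarrow> 'a \<Rightarrow> 'a \<Rightarrow> real" where
  "mg_matrix n E ends u v = (if u = v then n v else - real (n_edges E ends u v))"

text \<open>Determinant of the induced marked subgraph on vertex set S (Leibniz formula for the
  S x S matrix M); equals 1 for S empty.\<close>
definition mg_det :: "('a \<Rightarrow> real) \<Rightarrow> 'e set \<Rightarrow> ('e \<Rightarrow> 'a set) \<Rightarrow> 'a set \<Rightarrow> real" where
  "mg_det n E ends S =
     (\<Sum>p\<in>{p. p permutes S}. of_int (sign p) * (\<Prod>i\<in>S. mg_matrix n E ends i (p i)))"

definition ind_adj :: "'e set \<Rightarrow> ('e \<Rightarrow> 'a set) \<Rightarrow> 'a set \<Rightarrow> ('a \<times> 'a) set" where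
  "ind_adj E ends S = {(u, v). u \<in> S \<and> v \<in> S \<and> (\<exists>e\<in>ind_edges E ends S. ends e = {u, v})}"

definition n_components :: "'e set \<Rightarrow> ('e \<Rightarrow> 'a set) \<Rightarrow> 'a set \<Rightarrow> nat" where
  "n_components E ends S = card (S // ((ind_adj E ends S)\<^sup>*))"

definition h1 :: "'e set \<Rightarrow> ('e \<Rightarrow> 'a set) \<Rightarrow> 'a set \<Rightarrow> int" where
  "h1 E ends S = int (card (ind_edges E ends S)) - int (card S) + int (n_components E ends S)"

definition cross_matchings :: "'e set \<Rightarrow> ('e \<Rightarrow> 'a set) \<Rightarrow> 'a set \<Rightarrow> 'a set \<Rightarrow> 'e set set" where
  "cross_matchings E ends V1 V2 =
     {F. F \<subseteq> E \<and> F \<noteq> {} \<and>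
         (\<forall>e\<in>F. \<exists>u v. u \<in> V1 \<and> v \<in> V2 \<and> ends e = {u, v}) \<and>
         (\<forall>e\<in>F. \<forall>f\<in>F. e \<noteq> f \<longrightarrow> ends e \<inter> ends f = {})}"

end

theory Submission
  imports Defs
begin

(* In the Leibniz expansion of det \<Gamma> only permutations p with M i (p i) \<noteq> 0 for all i contribute,
   i.e. p moves every vertex along an edge. Counting edges and components, the hypothesis on h_1
   says exactly that every edge between V_1 and V_2 is a bridge. So if p sends i \<in> V_1 to p i \<in> V_2
   it sends p i back to i: otherwise the cycle of p through i leads from p i back to i without
   using the edge {i, p i}. Hence every contributing p splits uniquely into the transpositions
   along a set F of disjoint cross edges, each contributing sign -1 and the entries (-1)(-1), and
   permutations of V_1 - \<Union>F and V_2 - \<Union>F; the term F = {} is det \<Gamma>_1 \<sqdot> det \<Gamma>_2. *)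

definition edge_rel :: "('e \<Rightarrow> 'a set) \<Rightarrow> 'e set \<Rightarrow> ('a \<times> 'a) set" where
  "edge_rel ends F = {(u, v). \<exists>e\<in>F. ends e = {u, v}}"

definition edge_components :: "('e \<Rightarrow> 'a set) \<Rightarrow> 'e set \<Rightarrow> 'a set \<Rightarrow> nat" where
  "edge_components ends F S = card (S // (edge_rel ends F)\<^sup>*)"

lemma sym_edge_rel: "sym (edge_rel ends F)"
  unfolding edge_rel_def sym_def by (auto simp: insert_commute)

lemma edge_rel_rtrancl_sym: "(x, y) \<in> (edge_rel ends F)\<^sup>* \<Longrightarrow> (y, x) \<in> (edge_rel ends F)\<^sup>*"
  using sym_rtrancl[OF sym_edge_rel[of ends F]] unfolding sym_def by blast

lemma equiv_edge_rel_rtrancl: "equiv UNIV ((edge_rel ends F)\<^sup>*)"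
  unfolding equiv_def using sym_rtrancl[OF sym_edge_rel]
  by (auto simp: refl_rtrancl trans_rtrancl)

lemma edge_rel_Un: "edge_rel ends (F \<union> G) = edge_rel ends F \<union> edge_rel ends G"
  unfolding edge_rel_def by auto

lemma edge_rel_insert:
  "ends e = {a, b} \<Longrightarrow> edge_rel ends (insert e F) = edge_rel ends F \<union> {(a, b), (b, a)}"
  unfolding edge_rel_def by (auto simp: doubleton_eq_iff)

lemma edge_rel_subset: "\<forall>e\<in>F. ends e \<subseteq> S \<Longrightarrow> edge_rel ends F \<subseteq> S \<times> S"
  unfolding edge_rel_def by auto

lemma n_components_eq_edge_components:
  "n_components E ends S = edge_components ends (ind_edges E ends S) S"
proof -
  have "ind_adj E ends S = edge_rel ends (ind_edges E ends S)"
    unfolding ind_adj_def edge_rel_def ind_edges_def by auto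
  then show ?thesis
    unfolding n_components_def edge_components_def by simp
qed

lemma finite_quotient_of_finite: "finite A \<Longrightarrow> finite (A // r)"
  unfolding quotient_def by auto

lemma rtrancl_class_subset:
  assumes "R \<subseteq> S \<times> S" and "X \<in> S // R\<^sup>*"
  shows "X \<subseteq> S" and "X \<noteq> {}"
proof -
  obtain x where x: "x \<in> S" "X = R\<^sup>* `` {x}"
    using assms(2) unfolding quotient_def by auto
  have "R\<^sup>* `` S = S"
    using assms(1) by (intro Image_closed_trancl) auto
  then show "X \<subseteq> S" using x by auto
  show "X \<noteq> {}" using x by auto
qed

lemma rtrancl_Un_Image_disjoint:
  assumes R1: "R1 \<subseteq> S1 \<times> S1" and R2: "R2 \<subseteq> S2 \<times> S2" and disj: "S1 \<inter> S2 = {}" and x: "x \<in> S1"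
  shows "(R1 \<union> R2)\<^sup>* `` {x} = R1\<^sup>* `` {x}"
proof
  have closed: "R1\<^sup>* `` S1 = S1"
    using R1 by (intro Image_closed_trancl) auto
  have "(x, y) \<in> R1\<^sup>*" if "(x, y) \<in> (R1 \<union> R2)\<^sup>*" for y
    using that
  proof (induction rule: rtrancl_induct)
    case (step y z)
    then have "y \<in> S1" using closed x by blast
    then have "(y, z) \<in> R1" using step.hyps(2) R2 disj by auto
    with step.IH show ?case by simp
  qed simp
  then show "(R1 \<union> R2)\<^sup>* `` {x} \<subseteq> R1\<^sup>* `` {x}" by auto
  show "R1\<^sup>* `` {x} \<subseteq> (R1 \<union> R2)\<^sup>* `` {x}"
    using rtrancl_mono[of R1 "R1 \<union> R2"] by auto
qed

lemma edge_components_disjoint_Un: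
  assumes fin: "finite S1" "finite S2" and disj: "S1 \<inter> S2 = {}"
    and F1: "\<forall>e\<in>F1. ends e \<subseteq> S1" and F2: "\<forall>e\<in>F2. ends e \<subseteq> S2"
  shows "edge_components ends (F1 \<union> F2) (S1 \<union> S2)
           = edge_components ends F1 S1 + edge_components ends F2 S2"
proof -
  let ?R1 = "edge_rel ends F1" and ?R2 = "edge_rel ends F2"
  have R1: "?R1 \<subseteq> S1 \<times> S1" and R2: "?R2 \<subseteq> S2 \<times> S2"
    using F1 F2 by (simp_all add: edge_rel_subset)
  have "(?R1 \<union> ?R2)\<^sup>* `` {x} = ?R1\<^sup>* `` {x}" if "x \<in> S1" for x
    using rtrancl_Un_Image_disjoint[OF R1 R2 disj that] .
  moreover have "(?R1 \<union> ?R2)\<^sup>* `` {x} = ?R2\<^sup>* `` {x}" if "x \<in> S2" for x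
    using rtrancl_Un_Image_disjoint[OF R2 R1 _ that] disj by (simp add: Un_commute Int_commute)
  ultimately have quot: "(S1 \<union> S2) // (?R1 \<union> ?R2)\<^sup>* = S1 // ?R1\<^sup>* \<union> S2 // ?R2\<^sup>*"
    unfolding quotient_def UN_Un by (intro arg_cong2[where f = "(\<union>)"] SUP_cong) simp_all
  have "X \<notin> S2 // ?R2\<^sup>*" if "X \<in> S1 // ?R1\<^sup>*" for X
    using rtrancl_class_subset[OF R1 that] rtrancl_class_subset[OF R2, of X] disj by blast
  then have "S1 // ?R1\<^sup>* \<inter> S2 // ?R2\<^sup>* = {}" by blast
  then show ?thesis
    unfolding edge_components_def edge_rel_Un quot
    by (intro card_Un_disjoint) (simp_all add: fin finite_quotient_of_finite)
qed

lemma edge_components_insert_connected: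
  assumes e: "ends e = {a, b}" and ab: "(a, b) \<in> (edge_rel ends F)\<^sup>*"
  shows "edge_components ends (insert e F) S = edge_components ends F S"
proof -
  have "(b, a) \<in> (edge_rel ends F)\<^sup>*" using ab by (rule edge_rel_rtrancl_sym)
  with ab have "(edge_rel ends F \<union> {(a, b), (b, a)})\<^sup>* = (edge_rel ends F)\<^sup>*"
    by (intro rtrancl_subset) auto
  then show ?thesis
    unfolding edge_components_def edge_rel_insert[of ends e a b, OF e] by simp
qed

lemma rtrancl_edge_rel_insertD:
  assumes xy: "(x, y) \<in> (edge_rel ends (insert e F))\<^sup>*" and e: "ends e = {a, b}"
  shows "(x, y) \<in> (edge_rel ends F)\<^sup>*
         \<or> x \<in> (edge_rel ends F)\<^sup>* `` {a, b} \<and> y \<in> (edge_rel ends F)\<^sup>* `` {a, b}"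
  using xy
proof (induction rule: rtrancl_induct)
  case (step y z)
  let ?R = "edge_rel ends F"
  have "(y, z) \<in> ?R \<or> {y, z} = {a, b}"
    using step.hyps(2) unfolding edge_rel_insert[of ends e a b, OF e] by auto
  then show ?case
  proof
    assume "(y, z) \<in> ?R"
    with step.IH show ?case by (blast intro: rtrancl_into_rtrancl)
  next
    assume yz: "{y, z} = {a, b}"
    then have "(y, x) \<in> ?R\<^sup>* \<Longrightarrow> x \<in> ?R\<^sup>* `` {a, b}" by auto
    with step.IH yz show ?case by (auto dest: edge_rel_rtrancl_sym)
  qed
qed simp

lemma card_le_Suc_card_image:
  assumes "finite A" and "inj_on f (A - {c})"
  shows "card A \<le> Suc (card (f ` A))"
proof -
  have "card A \<le> Suc (card (A - {c}))"
    using assms(1) by (cases "c \<in> A") (simp_all add: card_Suc_Diff1)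
  also have "card (A - {c}) = card (f ` (A - {c}))"
    using assms(2) by (simp add: card_image)
  also have "\<dots> \<le> card (f ` A)"
    using assms(1) by (intro card_mono) auto
  finally show ?thesis by simp
qed

lemma edge_components_insert_le:
  assumes fin: "finite S" and e: "ends e = {a, b}"
  shows "edge_components ends F S \<le> Suc (edge_components ends (insert e F) S)"
proof -
  let ?R = "(edge_rel ends F)\<^sup>*" and ?R' = "(edge_rel ends (insert e F))\<^sup>*"
  define h where "h X = ?R' `` X" for X
  have "?R \<subseteq> ?R'" by (rule rtrancl_mono) (auto simp: edge_rel_def)
  then have h_class: "h (?R `` {x}) = ?R' `` {x}" for x
    unfolding h_def by (auto intro: rtrancl_trans)
  have class_eq: "?R `` {x} = ?R `` {y}" if "(x, y) \<in> ?R" for x y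
    using equiv_class_eq[OF equiv_edge_rel_rtrancl that] .
  have "inj_on h (S // ?R - {?R `` {b}})"
  proof (rule inj_onI)
    fix X Y assume X: "X \<in> S // ?R - {?R `` {b}}" and Y: "Y \<in> S // ?R - {?R `` {b}}"
      and hXY: "h X = h Y"
    obtain x y where x: "X = ?R `` {x}" and y: "Y = ?R `` {y}"
      using X Y unfolding quotient_def by auto
    have "(x, y) \<in> ?R'" using hXY h_class x y by auto
    from rtrancl_edge_rel_insertD[OF this e]
    consider "(x, y) \<in> ?R" | "x \<in> ?R `` {a, b}" "y \<in> ?R `` {a, b}" by blast
    then show "X = Y"
    proof cases
      case 1
      then show ?thesis using x y class_eq by simp
    next
      case 2
      then have "X = ?R `` {a}" and "Y = ?R `` {a}"
        using X Y x y class_eq by auto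
      then show ?thesis by simp
    qed
  qed
  then have "card (S // ?R) \<le> Suc (card (h ` (S // ?R)))"
    using fin by (intro card_le_Suc_card_image finite_quotient_of_finite)
  also have "h ` (S // ?R) = S // ?R'"
    unfolding quotient_def using h_class by auto
  finally show ?thesis unfolding edge_components_def .
qed

lemma edge_components_Un_le:
  assumes "finite S" "finite A" and "\<forall>e\<in>A. \<exists>a b. ends e = {a, b}"
  shows "edge_components ends F S \<le> edge_components ends (F \<union> A) S + card A"
  using assms(2,3)
proof (induction A rule: finite_induct)
  case (insert e A)
  then obtain a b where "ends e = {a, b}" by auto
  then have "edge_components ends (F \<union> A) S \<le> Suc (edge_components ends (insert e (F \<union> A)) S)"
    by (rule edge_components_insert_le[OF assms(1)])
  then show ?case using insert by simp
qed simp

lemma permutes_cycle_rtrancl: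
  assumes p: "p permutes S" "finite S" and step: "\<And>x. x \<noteq> i \<Longrightarrow> (x, p x) \<in> R\<^sup>*"
  shows "(p i, i) \<in> R\<^sup>*"
proof -
  obtain N where "N > 0" "(p ^^ N) i = i"
    using permutation_self p permutation_permutes by metis
  then have "\<exists>k. (p ^^ k) (p i) = i"
    by (metis Suc_pred comp_apply funpow_Suc_right)
  then obtain k where k: "(p ^^ k) (p i) = i" and before: "\<forall>m<k. (p ^^ m) (p i) \<noteq> i"
    using exists_least_iff[of "\<lambda>k. (p ^^ k) (p i) = i"] by blast
  have "(p i, (p ^^ m) (p i)) \<in> R\<^sup>*" if "m \<le> k" for m
    using that
  proof (induction m)
    case (Suc m)
    then have "((p ^^ m) (p i), p ((p ^^ m) (p i))) \<in> R\<^sup>*"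
      using before step by simp
    with Suc show ?case by (simp add: rtrancl_trans)
  qed simp
  then show ?thesis using k by force
qed

definition partner :: "('e \<Rightarrow> 'a set) \<Rightarrow> 'e set \<Rightarrow> 'a \<Rightarrow> 'a" where
  "partner ends F x = (THE y. \<exists>e\<in>F. ends e = {x, y})"

definition matching_perm :: "('e \<Rightarrow> 'a set) \<Rightarrow> 'e set \<Rightarrow> 'a \<Rightarrow> 'a" where
  "matching_perm ends F x = (if x \<in> \<Union>(ends ` F) then partner ends F x else x)"

definition matching :: "('e \<Rightarrow> 'a set) \<Rightarrow> 'e set \<Rightarrow> bool" where
  "matching ends F \<longleftrightarrow> finite F \<and> (\<forall>e\<in>F. card (ends e) = 2) \<and> disjoint_family_on ends F"

lemma partner_eq:
  assumes "disjoint_family_on ends F" and "e \<in> F" and "ends e = {x, y}"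
  shows "partner ends F x = y"
  unfolding partner_def
proof (rule the_equality)
  fix y' assume "\<exists>e\<in>F. ends e = {x, y'}"
  then obtain f where "f \<in> F" "ends f = {x, y'}" by blast
  with assms have "x \<in> ends e \<inter> ends f" by simp
  with assms(1,2) \<open>f \<in> F\<close> have "e = f" unfolding disjoint_family_on_def by blast
  with assms \<open>ends f = {x, y'}\<close> show "y' = y" by (auto simp: doubleton_eq_iff)
qed (use assms in blast)

lemma matching_insert:
  "matching ends (insert e F) \<Longrightarrow> matching ends F"
  unfolding matching_def by (auto intro: disjoint_family_on_mono[rotated])

lemma matching_perm_insert:
  assumes M: "matching ends (insert e F)" and e: "e \<notin> F" "ends e = {a, b}"
  shows "matching_perm ends (insert e F) = transpose a b \<circ> matching_perm ends F"
proof
  fix x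
  have disj: "disjoint_family_on ends (insert e F)" and doubletons: "\<forall>f\<in>F. card (ends f) = 2"
    using M unfolding matching_def by auto
  have disjF: "disjoint_family_on ends F"
    using disj by (rule disjoint_family_on_mono[rotated]) auto
  have ab: "a \<notin> \<Union>(ends ` F)" "b \<notin> \<Union>(ends ` F)"
    using disj e unfolding disjoint_family_on_def by fastforce+
  consider (old) "x \<in> \<Union>(ends ` F)" | (new) "x \<in> {a, b}" | (none) "x \<notin> \<Union>(ends ` insert e F)"
    using e(2) by auto
  then show "matching_perm ends (insert e F) x = (transpose a b \<circ> matching_perm ends F) x"
  proof cases
    case old
    then obtain f where f: "f \<in> F" "x \<in> ends f" by auto
    then obtain y where y: "ends f = {x, y}"
      using doubletons by (metis card_2_iff insert_commute insertE singletonD)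
    have "partner ends F x = y" "partner ends (insert e F) x = y"
      using partner_eq[OF disjF f(1) y] partner_eq[OF disj _ y] f(1) by auto
    moreover have "y \<notin> {a, b}" using ab f y by auto
    ultimately show ?thesis using old ab unfolding matching_perm_def by auto
  next
    case new
    then have "partner ends (insert e F) x = transpose a b x"
      using partner_eq[OF disj, of e a b] partner_eq[OF disj, of e b a] e(2)
      by (auto simp: insert_commute)
    then show ?thesis using new ab e(2) unfolding matching_perm_def by auto
  next
    case none
    then show ?thesis using e(2) unfolding matching_perm_def by auto
  qed
qed

lemma matching_perm_permutes:
  "matching ends F \<Longrightarrow> matching_perm ends F permutes \<Union>(ends ` F)"
proof (induction F rule: infinite_finite_induct)
  case empty
  show ?case by (simp add: matching_perm_def permutes_id[unfolded id_def])
next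
  case (insert e F)
  obtain a b where ab: "ends e = {a, b}"
    using insert.prems unfolding matching_def by (auto simp: card_2_iff)
  have "matching_perm ends F permutes \<Union>(ends ` insert e F)"
    using insert.IH[OF matching_insert[OF insert.prems]] by (rule permutes_subset) auto
  moreover have "transpose a b permutes \<Union>(ends ` insert e F)"
    using ab by (intro permutes_swap_id) auto
  ultimately show ?case
    unfolding matching_perm_insert[OF insert.prems insert.hyps(2) ab] by (rule permutes_compose)
qed (simp add: matching_def)

lemma sign_matching_perm:
  "matching ends F \<Longrightarrow> sign (matching_perm ends F) = (-1) ^ card F"
proof (induction F rule: infinite_finite_induct)
  case empty
  show ?case by (simp add: matching_perm_def sign_id[unfolded id_def])
next
  case (insert e F)
  obtain a b where ab: "ends e = {a, b}" "a \<noteq> b"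
    using insert.prems unfolding matching_def by (auto simp: card_2_iff)
  have M: "matching ends F" using insert.prems by (rule matching_insert)
  then have "finite (\<Union>(ends ` F))"
    unfolding matching_def by (auto intro: card_ge_0_finite)
  then have "permutation (matching_perm ends F)"
    using matching_perm_permutes[OF M] permutation_permutes by blast
  then have "sign (transpose a b \<circ> matching_perm ends F) = sign (transpose a b) * sign (matching_perm ends F)"
    by (rule sign_compose[OF permutation_swap_id])
  then show ?case
    unfolding matching_perm_insert[OF insert.prems insert.hyps(2) ab(1)]
    using insert.IH[OF M] insert.hyps ab(2) by (simp add: sign_swap_id del: comp_apply)
qed (simp add: matching_def)

lemma h1_partition_defect:
  assumes graph: "marked_graph V E ends" and V: "V = V1 \<union> V2" and disj: "V1 \<inter> V2 = {}"
  defines "inner \<equiv> ind_edges E ends V1 \<union> ind_edges E ends V2"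
  shows "h1 E ends V - (h1 E ends V1 + h1 E ends V2)
           = int (card (E - inner)) + int (edge_components ends E V)
             - int (edge_components ends inner V)"
proof -
  let ?E1 = "ind_edges E ends V1" and ?E2 = "ind_edges E ends V2"
  have finV: "finite V" and finE: "finite E" and ends: "\<forall>e\<in>E. ends e \<subseteq> V \<and> card (ends e) = 2"
    using graph unfolding marked_graph_def by auto
  have "?E1 \<inter> ?E2 = {}"
  proof (rule ccontr)
    assume "?E1 \<inter> ?E2 \<noteq> {}"
    then obtain e where "e \<in> E" "ends e \<subseteq> V1 \<inter> V2" unfolding ind_edges_def by auto
    with disj ends show False by fastforce
  qed
  moreover have "finite ?E1" "finite ?E2"
    using finE unfolding ind_edges_def by auto
  ultimately have "card inner = card ?E1 + card ?E2"
    unfolding inner_def by (rule card_Un_disjoint[rotated 2])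
  moreover have "inner \<subseteq> E" unfolding inner_def ind_edges_def by auto
  ultimately have card_E: "card E = card ?E1 + card ?E2 + card (E - inner)"
    using finE card_mono[OF finE, of inner] by (simp add: card_Diff_subset finite_subset)
  have card_V: "card V = card V1 + card V2"
    using finV V disj by (simp add: card_Un_disjoint)
  have components: "edge_components ends inner V
                      = edge_components ends ?E1 V1 + edge_components ends ?E2 V2"
    unfolding V inner_def
    by (rule edge_components_disjoint_Un) (use finV V disj in \<open>auto simp: ind_edges_def\<close>)
  have "ind_edges E ends V = E" using ends unfolding ind_edges_def by auto
  then show ?thesis
    unfolding h1_def n_components_eq_edge_components using card_E card_V components by simp
qed

lemma cross_edge_is_bridge:
  assumes graph: "marked_graph V E ends" and V: "V = V1 \<union> V2" and disj: "V1 \<inter> V2 = {}"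
    and h1: "h1 E ends V = h1 E ends V1 + h1 E ends V2"
    and e: "e \<in> E" "u \<in> V1" "v \<in> V2" "ends e = {u, v}"
  shows "(u, v) \<notin> (edge_rel ends (E - {e}))\<^sup>*"
proof
  assume connected: "(u, v) \<in> (edge_rel ends (E - {e}))\<^sup>*"
  define inner where "inner = ind_edges E ends V1 \<union> ind_edges E ends V2"
  have finV: "finite V" and finE: "finite E"
    using graph unfolding marked_graph_def by auto
  have doubletons: "\<forall>f\<in>E. \<exists>a b. ends f = {a, b}"
    using graph unfolding marked_graph_def card_2_iff by blast
  have e_cross: "e \<in> E - inner" using e disj unfolding inner_def ind_edges_def by auto
  have "edge_components ends inner V
          \<le> edge_components ends (inner \<union> (E - inner - {e})) V + card (E - inner - {e})"
    using finV finE doubletons by (intro edge_components_Un_le) auto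
  also have "inner \<union> (E - inner - {e}) = E - {e}"
    using e_cross unfolding inner_def ind_edges_def by auto
  also have "edge_components ends (E - {e}) V = edge_components ends E V"
    using edge_components_insert_connected[OF e(4) connected] e(1) by (simp add: insert_absorb)
  finally have "edge_components ends inner V < edge_components ends E V + card (E - inner)"
    using finE e_cross card_Diff1_less[of "E - inner" e] by simp
  then show False
    using h1_partition_defect[OF graph V disj] h1 unfolding inner_def by linarith
qed

lemma mg_matrix_nonzero_edge:
  assumes "mg_matrix n E ends u v \<noteq> 0" and "u \<noteq> v"
  shows "\<exists>e\<in>E. ends e = {u, v}"
  using assms unfolding mg_matrix_def n_edges_def by (auto simp: card_eq_0_iff)

lemma permutes_bij_betw_invariant:
  assumes "p permutes S" and "finite A" and "p ` A \<subseteq> A"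
  shows "bij_betw p A A"
proof -
  have "inj_on p A" using permutes_inj[OF assms(1)] by (rule inj_on_subset) simp
  then show ?thesis
    using endo_inj_surj[OF assms(2,3)] by (simp add: bij_betw_def)
qed

locale bridged_partition =
  fixes V V1 V2 :: "'a set" and E :: "'e set" and ends :: "'e \<Rightarrow> 'a set"
    and n :: "'a \<Rightarrow> real"
  assumes graph: "marked_graph V E ends"
    and partition: "V = V1 \<union> V2" and disjoint: "V1 \<inter> V2 = {}"
    and cross_bridge: "\<And>e u v. e \<in> E \<Longrightarrow> u \<in> V1 \<Longrightarrow> v \<in> V2 \<Longrightarrow> ends e = {u, v} \<Longrightarrow>
                         (u, v) \<notin> (edge_rel ends (E - {e}))\<^sup>*"
begin

abbreviation M :: "'a \<Rightarrow> 'a \<Rightarrow> real" where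
  "M \<equiv> mg_matrix n E ends"

abbreviation covered :: "'e set \<Rightarrow> 'a set" where
  "covered F \<equiv> \<Union>(ends ` F)"

lemma finite_V: "finite V" and finite_E: "finite E"
  and ends_edge: "e \<in> E \<Longrightarrow> ends e \<subseteq> V \<and> card (ends e) = 2"
  using graph unfolding marked_graph_def by auto

lemma cross_bridge_sym:
  assumes "e \<in> E" "ends e = {u, v}" "u \<in> V1 \<and> v \<in> V2 \<or> u \<in> V2 \<and> v \<in> V1"
  shows "(u, v) \<notin> (edge_rel ends (E - {e}))\<^sup>*"
  using assms cross_bridge[of e u v] cross_bridge[of e v u] edge_rel_rtrancl_sym
  by (metis insert_commute)

lemma cross_edge_unique:
  assumes "e \<in> E" "f \<in> E" "ends e = {u, v}" "ends f = {u, v}" "u \<in> V1" "v \<in> V2"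
  shows "e = f"
proof (rule ccontr)
  assume "e \<noteq> f"
  with assms(2) have "f \<in> E - {e}" by simp
  with assms(4) have "(u, v) \<in> edge_rel ends (E - {e})"
    unfolding edge_rel_def by blast
  then show False using cross_bridge[OF assms(1,5,6,3)] by auto
qed

lemma M_cross_edge:
  assumes "e \<in> E" "ends e = {u, v}" "u \<in> V1" "v \<in> V2"
  shows "M u v = -1" and "M v u = -1"
proof -
  have "{f \<in> E. ends f = {u, v}} = {e}"
    using cross_edge_unique[OF assms(1) _ assms(2) _ assms(3,4)] assms(1,2) by blast
  moreover have "u \<noteq> v" using assms(3,4) disjoint by auto
  ultimately show "M u v = -1" "M v u = -1"
    unfolding mg_matrix_def n_edges_def by (simp_all add: insert_commute)
qed

definition leibniz_term :: "'a set \<Rightarrow> ('a \<Rightarrow> 'a) \<Rightarrow> real" where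
  "leibniz_term S p = of_int (sign p) * (\<Prod>i\<in>S. M i (p i))"

lemma mg_det_eq_sum_leibniz_term:
  "mg_det n E ends S = (\<Sum>p | p permutes S. leibniz_term S p)"
  unfolding mg_det_def leibniz_term_def ..

definition matchings :: "'e set set" where
  "matchings = insert {} (cross_matchings E ends V1 V2)"

lemma matchings_iff:
  "F \<in> matchings \<longleftrightarrow>
     F \<subseteq> E \<and> (\<forall>e\<in>F. \<exists>u v. u \<in> V1 \<and> v \<in> V2 \<and> ends e = {u, v}) \<and> disjoint_family_on ends F"
  unfolding matchings_def cross_matchings_def disjoint_family_on_def by auto

lemma finite_matchings: "finite matchings"
  using finite_E by (rule finite_subset[rotated, OF finite_Pow_iff[THEN iffD2]])
    (auto simp: matchings_iff)

lemma matching_matchings: "F \<in> matchings \<Longrightarrow> matching ends F"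
  unfolding matchings_iff matching_def using finite_E ends_edge by (auto intro: finite_subset)

lemma covered_subset: "F \<in> matchings \<Longrightarrow> covered F \<subseteq> V"
  unfolding matchings_iff using ends_edge by blast

definition assemble :: "'e set \<Rightarrow> ('a \<Rightarrow> 'a) \<Rightarrow> ('a \<Rightarrow> 'a) \<Rightarrow> 'a \<Rightarrow> 'a" where
  "assemble F s1 s2 = s1 \<circ> s2 \<circ> matching_perm ends F"

definition cross_edges :: "('a \<Rightarrow> 'a) \<Rightarrow> 'e set" where
  "cross_edges p = {e \<in> E. \<exists>i\<in>V1. p i \<in> V2 \<and> ends e = {i, p i}}"

context
  fixes F :: "'e set" and s1 s2 :: "'a \<Rightarrow> 'a"
  assumes F: "F \<in> matchings"
    and s1: "s1 permutes V1 - covered F" and s2: "s2 permutes V2 - covered F"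
begin

lemma assemble_covered:
  assumes "x \<in> covered F"
  shows "assemble F s1 s2 x = partner ends F x"
proof -
  have "matching_perm ends F x \<in> covered F"
    using assms by (simp only: permutes_in_image[OF matching_perm_permutes[OF matching_matchings[OF F]]])
  moreover have "matching_perm ends F x = partner ends F x"
    using assms unfolding matching_perm_def by simp
  ultimately show ?thesis
    unfolding assemble_def using s1 s2 by (simp add: permutes_not_in)
qed

lemma assemble_V1:
  assumes "x \<in> V1 - covered F"
  shows "assemble F s1 s2 x = s1 x"
proof -
  have "x \<notin> V2 - covered F" using assms disjoint by auto
  then show ?thesis
    using assms permutes_not_in[OF s2] unfolding assemble_def matching_perm_def by simp
qed

lemma assemble_V2:
  assumes "x \<in> V2 - covered F"
  shows "assemble F s1 s2 x = s2 x"
proof -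
  have "s2 x \<in> V2 - covered F" using assms permutes_in_image[OF s2] by simp
  then have "s2 x \<notin> V1 - covered F" using disjoint by auto
  then show ?thesis
    using assms permutes_not_in[OF s1] unfolding assemble_def matching_perm_def by simp
qed

lemma assemble_edge:
  assumes "e \<in> F" "ends e = {u, v}"
  shows "assemble F s1 s2 u = v"
proof -
  have "disjoint_family_on ends F" using F unfolding matchings_iff by simp
  then show ?thesis using assms assemble_covered partner_eq by fastforce
qed

lemma assemble_permutes: "assemble F s1 s2 permutes V"
  unfolding assemble_def
proof (intro permutes_compose)
  show "matching_perm ends F permutes V"
    using matching_perm_permutes[OF matching_matchings[OF F]] covered_subset[OF F]
    by (rule permutes_subset)
  show "s2 permutes V" using s2 by (rule permutes_subset) (use partition in auto)
  show "s1 permutes V" using s1 by (rule permutes_subset) (use partition in auto)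
qed

lemma leibniz_term_assemble:
  "leibniz_term V (assemble F s1 s2)
     = (-1) ^ card F * leibniz_term (V1 - covered F) s1 * leibniz_term (V2 - covered F) s2"
proof -
  let ?p = "assemble F s1 s2" and ?U = "covered F"
  have M: "matching ends F" by (rule matching_matchings[OF F])
  have finU: "finite ?U" using covered_subset[OF F] finite_V by (rule finite_subset)
  have fin12: "finite (V1 - ?U)" "finite (V2 - ?U)" using finite_V partition by auto
  have "permutation s1" "permutation s2" "permutation (matching_perm ends F)"
    using s1 s2 matching_perm_permutes[OF M] fin12 finU permutation_permutes by blast+
  then have sign: "sign ?p = sign s1 * sign s2 * (-1) ^ card F"
    unfolding assemble_def
    by (simp add: sign_compose permutation_compose sign_matching_perm[OF M] o_assoc[symmetric]
        del: comp_apply)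
  have "(\<Prod>i\<in>?U. M i (?p i)) = (\<Prod>e\<in>F. \<Prod>i\<in>ends e. M i (?p i))"
    using M unfolding matching_def
    by (intro prod.UNION_disjoint) (auto simp: disjoint_family_on_def intro: card_ge_0_finite)
  also have "\<dots> = 1"
  proof (rule prod.neutral, rule ballI)
    fix e assume e: "e \<in> F"
    then obtain u v where uv: "u \<in> V1" "v \<in> V2" "ends e = {u, v}"
      using F unfolding matchings_iff by blast
    moreover have "e \<in> E" using e F unfolding matchings_iff by blast
    moreover have "?p u = v" "?p v = u"
      using assemble_edge[OF e uv(3)] assemble_edge[OF e, of v u] uv(3) by (auto simp: insert_commute)
    moreover have "u \<noteq> v" using uv disjoint by auto
    ultimately show "(\<Prod>i\<in>ends e. M i (?p i)) = 1" using M_cross_edge by simp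
  qed
  finally have covered_part: "(\<Prod>i\<in>?U. M i (?p i)) = 1" .
  have V_split: "V = ((V1 - ?U) \<union> (V2 - ?U)) \<union> ?U" using partition covered_subset[OF F] by auto
  have "(\<Prod>i\<in>V. M i (?p i)) = (\<Prod>i\<in>(V1 - ?U) \<union> (V2 - ?U). M i (?p i)) * (\<Prod>i\<in>?U. M i (?p i))"
    by (subst V_split, rule prod.union_disjoint) (use fin12 finU in auto)
  also have "\<dots> = (\<Prod>i\<in>V1 - ?U. M i (?p i)) * (\<Prod>i\<in>V2 - ?U. M i (?p i))"
    using fin12 disjoint covered_part by (subst prod.union_disjoint) auto
  also have "\<dots> = (\<Prod>i\<in>V1 - ?U. M i (s1 i)) * (\<Prod>i\<in>V2 - ?U. M i (s2 i))"
    using assemble_V1 assemble_V2 by simp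
  finally show ?thesis
    unfolding leibniz_term_def sign by (simp add: algebra_simps)
qed

lemma cross_edges_assemble: "cross_edges (assemble F s1 s2) = F"
proof
  show "F \<subseteq> cross_edges (assemble F s1 s2)"
  proof
    fix e assume e: "e \<in> F"
    then obtain u v where uv: "u \<in> V1" "v \<in> V2" "ends e = {u, v}"
      using F unfolding matchings_iff by blast
    moreover have "e \<in> E" using e F unfolding matchings_iff by blast
    moreover have "assemble F s1 s2 u = v" using assemble_edge[OF e uv(3)] .
    ultimately show "e \<in> cross_edges (assemble F s1 s2)"
      unfolding cross_edges_def by auto
  qed
  show "cross_edges (assemble F s1 s2) \<subseteq> F"
  proof
    fix e assume "e \<in> cross_edges (assemble F s1 s2)"
    then obtain i where i: "e \<in> E" "i \<in> V1" "assemble F s1 s2 i \<in> V2"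
      and e: "ends e = {i, assemble F s1 s2 i}"
      unfolding cross_edges_def by auto
    have "i \<in> covered F"
    proof (rule ccontr)
      assume "i \<notin> covered F"
      then have "assemble F s1 s2 i \<in> V1"
        using i(2) assemble_V1 permutes_in_image[OF s1] by auto
      then show False using i(3) disjoint by auto
    qed
    then obtain f u v where f: "f \<in> F" "ends f = {u, v}" "u \<in> V1" "v \<in> V2" and "i \<in> ends f"
      using F unfolding matchings_iff by blast
    then have "i = u" using i(2) disjoint by auto
    then have "ends e = {u, v}" using e assemble_edge[OF f(1,2)] by simp
    moreover have "f \<in> E" using f(1) F unfolding matchings_iff by blast
    ultimately have "e = f" using cross_edge_unique[OF i(1) _ _ f(2-4)] by blast
    then show "e \<in> F" using f(1) by simp
  qed
qed

lemma restrict_id_assemble: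
  "restrict_id (assemble F s1 s2) (V1 - covered F) = s1"
  "restrict_id (assemble F s1 s2) (V2 - covered F) = s2"
proof -
  show "restrict_id (assemble F s1 s2) (V1 - covered F) = s1"
    using assemble_V1 permutes_not_in[OF s1] by (auto simp: restrict_id_def fun_eq_iff)
  show "restrict_id (assemble F s1 s2) (V2 - covered F) = s2"
    using assemble_V2 permutes_not_in[OF s2] by (auto simp: restrict_id_def fun_eq_iff)
qed

end

definition crossing :: "('a \<Rightarrow> 'a) \<Rightarrow> 'a set" where
  "crossing p = {x \<in> V1. p x \<in> V2} \<union> {x \<in> V2. p x \<in> V1}"

context
  fixes p :: "'a \<Rightarrow> 'a"
  assumes p: "p permutes V" and nonzero: "leibniz_term V p \<noteq> 0"
begin

lemma moved_vertex_edge: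
  assumes "p i \<noteq> i"
  shows "\<exists>e\<in>E. ends e = {i, p i}"
proof -
  have "i \<in> V" using p assms by (meson permutes_not_in)
  then have "M i (p i) \<noteq> 0"
    using nonzero finite_V unfolding leibniz_term_def by auto
  then show ?thesis using assms by (metis mg_matrix_nonzero_edge)
qed

lemma crossing_involutive:
  assumes "x \<in> crossing p"
  shows "p (p x) = x"
proof (rule ccontr)
  assume not_involutive: "p (p x) \<noteq> x"
  have sides: "x \<in> V1 \<and> p x \<in> V2 \<or> x \<in> V2 \<and> p x \<in> V1"
    using assms unfolding crossing_def by auto
  then have "p x \<noteq> x" using disjoint by auto
  then obtain e where e: "e \<in> E" "ends e = {x, p x}" using moved_vertex_edge by blast
  let ?R = "edge_rel ends (E - {e})"
  have "(y, p y) \<in> ?R\<^sup>*" if "y \<noteq> x" for y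
  proof (cases "p y = y")
    case False
    then obtain f where f: "f \<in> E" "ends f = {y, p y}" using moved_vertex_edge by blast
    have "f \<noteq> e"
    proof
      assume "f = e"
      with e f have "{y, p y} = {x, p x}" by simp
      with that have "y = p x" "p y = x" by (auto simp: doubleton_eq_iff)
      with not_involutive show False by simp
    qed
    with f have "(y, p y) \<in> ?R" unfolding edge_rel_def by blast
    then show ?thesis by simp
  qed simp
  then have "(p x, x) \<in> ?R\<^sup>*" by (rule permutes_cycle_rtrancl[OF p finite_V])
  then have "(x, p x) \<in> ?R\<^sup>*" by (rule edge_rel_rtrancl_sym)
  with cross_bridge_sym[OF e sides] show False by contradiction
qed

lemma crossing_invariant:
  assumes A: "A = V1 \<or> A = V2" and x: "x \<in> A - crossing p"
  shows "p x \<in> A - crossing p"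
proof -
  have "x \<in> V" using x A partition by auto
  then have "p x \<in> V" using p by (simp add: permutes_in_image)
  then have px: "p x \<in> A" using x A partition disjoint unfolding crossing_def by auto
  have "p x \<notin> crossing p"
  proof
    assume cross: "p x \<in> crossing p"
    then have "p (p (p x)) = p x" by (rule crossing_involutive)
    then have "p (p x) = x" using permutes_inj[OF p] by (simp add: inj_eq)
    with cross px x A disjoint show False unfolding crossing_def by auto
  qed
  with px show ?thesis by simp
qed

lemma restrict_id_permutes:
  assumes "A = V1 \<or> A = V2"
  shows "restrict_id p (A - crossing p) permutes A - crossing p"
proof (rule permutes_restrict_id, rule permutes_bij_betw_invariant[OF p])
  show "finite (A - crossing p)" using assms finite_V partition by auto
  show "p ` (A - crossing p) \<subseteq> A - crossing p" using crossing_invariant[OF assms] by auto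
qed

lemma crossing_edge:
  assumes "x \<in> crossing p"
  shows "\<exists>e\<in>cross_edges p. ends e = {x, p x}"
proof -
  have "p x \<noteq> x" using assms disjoint unfolding crossing_def by auto
  then obtain e where e: "e \<in> E" "ends e = {x, p x}" using moved_vertex_edge by blast
  have involutive: "p (p x) = x" using assms by (rule crossing_involutive)
  consider "x \<in> V1" "p x \<in> V2" | "p x \<in> V1" "p (p x) \<in> V2"
    using assms involutive unfolding crossing_def by auto
  then show ?thesis
  proof cases
    case 1
    then show ?thesis using e unfolding cross_edges_def by auto
  next
    case 2
    have "ends e = {p x, p (p x)}" using e(2) involutive by (simp add: insert_commute)
    with 2 e(1) have "e \<in> cross_edges p" unfolding cross_edges_def by blast
    then show ?thesis using e(2) by blast
  qed
qed

lemma covered_cross_edges: "covered (cross_edges p) = crossing p"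
proof
  show "covered (cross_edges p) \<subseteq> crossing p"
  proof
    fix x assume "x \<in> covered (cross_edges p)"
    then obtain e i where i: "i \<in> V1" "p i \<in> V2" and "ends e = {i, p i}" "x \<in> ends e"
      unfolding cross_edges_def by auto
    moreover have "p (p i) = i" using crossing_involutive i unfolding crossing_def by auto
    ultimately show "x \<in> crossing p" unfolding crossing_def by auto
  qed
  show "crossing p \<subseteq> covered (cross_edges p)" using crossing_edge by fastforce
qed

lemma cross_edges_matchings: "cross_edges p \<in> matchings"
  unfolding matchings_iff
proof (intro conjI)
  show "cross_edges p \<subseteq> E" unfolding cross_edges_def by auto
  show "\<forall>e\<in>cross_edges p. \<exists>u v. u \<in> V1 \<and> v \<in> V2 \<and> ends e = {u, v}"
    unfolding cross_edges_def by auto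
  show "disjoint_family_on ends (cross_edges p)"
    unfolding disjoint_family_on_def
  proof (intro ballI impI)
    fix e f assume "e \<in> cross_edges p" "f \<in> cross_edges p" "e \<noteq> f"
    then obtain i j where i: "e \<in> E" "i \<in> V1" "p i \<in> V2" "ends e = {i, p i}"
      and j: "f \<in> E" "j \<in> V1" "p j \<in> V2" "ends f = {j, p j}"
      unfolding cross_edges_def by auto
    have "i \<noteq> j" using cross_edge_unique[OF i(1) j(1)] i j \<open>e \<noteq> f\<close> by auto
    then have "p i \<noteq> p j" using permutes_inj[OF p] by (auto simp: inj_eq)
    with \<open>i \<noteq> j\<close> show "ends e \<inter> ends f = {}" using i j disjoint by auto
  qed
qed

lemma assemble_cross_edges:
  "assemble (cross_edges p) (restrict_id p (V1 - crossing p)) (restrict_id p (V2 - crossing p)) = p"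
  (is "assemble ?F ?s1 ?s2 = p")
proof
  fix x
  have F: "?F \<in> matchings" by (rule cross_edges_matchings)
  have s1: "?s1 permutes V1 - covered ?F" and s2: "?s2 permutes V2 - covered ?F"
    unfolding covered_cross_edges using restrict_id_permutes by simp_all
  consider "x \<in> crossing p" | "x \<in> V1 - crossing p" | "x \<in> V2 - crossing p" | "x \<notin> V"
    using partition by auto
  then show "assemble ?F ?s1 ?s2 x = p x"
  proof cases
    case 1
    then obtain e where "e \<in> ?F" "ends e = {x, p x}" using crossing_edge by blast
    then show ?thesis by (rule assemble_edge[OF F s1 s2])
  next
    case 2
    then show ?thesis using assemble_V1[OF F s1 s2] covered_cross_edges by simp
  next
    case 3
    then show ?thesis using assemble_V2[OF F s1 s2] covered_cross_edges by simp
  next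
    case 4
    then show ?thesis using assemble_permutes[OF F s1 s2] p by (simp add: permutes_not_in)
  qed
qed

end

definition decompositions :: "('e set \<times> ('a \<Rightarrow> 'a) \<times> ('a \<Rightarrow> 'a)) set" where
  "decompositions = (SIGMA F:matchings.
     {s1. s1 permutes V1 - covered F} \<times> {s2. s2 permutes V2 - covered F})"

lemma inj_on_assemble: "inj_on (\<lambda>(F, s1, s2). assemble F s1 s2) decompositions"
proof (rule inj_onI)
  fix t t' assume "t \<in> decompositions" "t' \<in> decompositions"
    and eq: "(\<lambda>(F, s1, s2). assemble F s1 s2) t = (\<lambda>(F, s1, s2). assemble F s1 s2) t'"
  then obtain F s1 s2 F' s1' s2' where t: "t = (F, s1, s2)" and t': "t' = (F', s1', s2')"
    and F: "F \<in> matchings" "s1 permutes V1 - covered F" "s2 permutes V2 - covered F"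
    and F': "F' \<in> matchings" "s1' permutes V1 - covered F'" "s2' permutes V2 - covered F'"
    unfolding decompositions_def by auto
  have same: "assemble F s1 s2 = assemble F' s1' s2'" using eq t t' by simp
  then have "F = F'"
    using cross_edges_assemble[OF F] cross_edges_assemble[OF F'] by simp
  moreover have "s1 = s1'" "s2 = s2'"
    using restrict_id_assemble[OF F] restrict_id_assemble[OF F'] same \<open>F = F'\<close> by metis+
  ultimately show "t = t'" using t t' by simp
qed

lemma leibniz_term_vanishes:
  assumes p: "p permutes V" and not_assembled: "p \<notin> (\<lambda>(F, s1, s2). assemble F s1 s2) ` decompositions"
  shows "leibniz_term V p = 0"
proof (rule ccontr)
  assume nonzero: "leibniz_term V p \<noteq> 0"
  let ?d = "(cross_edges p, restrict_id p (V1 - crossing p), restrict_id p (V2 - crossing p))"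
  have "?d \<in> decompositions"
    unfolding decompositions_def
    using cross_edges_matchings[OF p nonzero] restrict_id_permutes[OF p nonzero]
    by (simp add: covered_cross_edges[OF p nonzero])
  moreover have "(\<lambda>(F, s1, s2). assemble F s1 s2) ?d = p"
    using assemble_cross_edges[OF p nonzero] by simp
  ultimately show False using not_assembled by (metis image_eqI)
qed

lemma sum_leibniz_term_assemble:
  assumes "F \<in> matchings"
  shows "(\<Sum>s1 | s1 permutes V1 - covered F. \<Sum>s2 | s2 permutes V2 - covered F.
            leibniz_term V (assemble F s1 s2))
         = (-1) ^ card F * mg_det n E ends (V1 - covered F) * mg_det n E ends (V2 - covered F)"
proof -
  have "(\<Sum>s1 | s1 permutes V1 - covered F. \<Sum>s2 | s2 permutes V2 - covered F.
            leibniz_term V (assemble F s1 s2))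
        = (\<Sum>s1 | s1 permutes V1 - covered F. \<Sum>s2 | s2 permutes V2 - covered F.
            (-1) ^ card F * (leibniz_term (V1 - covered F) s1 * leibniz_term (V2 - covered F) s2))"
    using leibniz_term_assemble[OF assms] by (intro sum.cong refl) (simp add: mult.assoc)
  also have "\<dots> = (-1) ^ card F * ((\<Sum>s1 | s1 permutes V1 - covered F. leibniz_term (V1 - covered F) s1)
                                 * (\<Sum>s2 | s2 permutes V2 - covered F. leibniz_term (V2 - covered F) s2))"
    by (subst sum_product) (simp only: sum_distrib_left)
  finally show ?thesis by (simp add: mg_det_eq_sum_leibniz_term mult.assoc)
qed

lemma mg_det_eq_sum_matchings:
  "mg_det n E ends V
     = (\<Sum>F\<in>matchings. (-1) ^ card F * mg_det n E ends (V1 - covered F)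
                                    * mg_det n E ends (V2 - covered F))"
proof -
  let ?assemble = "\<lambda>(F, s1, s2). assemble F s1 s2"
  have "?assemble ` decompositions \<subseteq> {p. p permutes V}"
    unfolding decompositions_def using assemble_permutes by auto
  then have "mg_det n E ends V = (\<Sum>p\<in>?assemble ` decompositions. leibniz_term V p)"
    unfolding mg_det_eq_sum_leibniz_term
    using finite_permutations[OF finite_V] leibniz_term_vanishes
    by (intro sum.mono_neutral_right) auto
  also have "\<dots> = (\<Sum>(F, s1, s2)\<in>decompositions. leibniz_term V (assemble F s1 s2))"
    by (subst sum.reindex[OF inj_on_assemble]) (simp add: comp_def case_prod_beta)
  also have "\<dots> = (\<Sum>F\<in>matchings. \<Sum>(s1, s2)\<in>{s1. s1 permutes V1 - covered F}
                                           \<times> {s2. s2 permutes V2 - covered F}.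
                    leibniz_term V (assemble F s1 s2))"
    unfolding decompositions_def using finite_matchings finite_V partition
    by (subst sum.Sigma) (auto intro!: finite_cartesian_product finite_permutations)
  also have "\<dots> = (\<Sum>F\<in>matchings. (-1) ^ card F * mg_det n E ends (V1 - covered F)
                                              * mg_det n E ends (V2 - covered F))"
    by (intro sum.cong refl) (simp add: sum.cartesian_product[symmetric] sum_leibniz_term_assemble)
  finally show ?thesis .
qed

end

theorem lemma2p4:
  fixes V V1 V2 :: "'a set" and E :: "'e set" and ends :: "'e \<Rightarrow> 'a set"
    and n :: "'a \<Rightarrow> real"
  assumes "marked_graph V E ends"
    and "V = V1 \<union> V2" and "V1 \<inter> V2 = {}"
    and "h1 E ends V = h1 E ends V1 + h1 E ends V2"
  shows "mg_det n E ends V =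
           mg_det n E ends V1 * mg_det n E ends V2
           + (\<Sum>F\<in>cross_matchings E ends V1 V2.
                (-1) ^ card F * mg_det n E ends (V1 - \<Union>(ends ` F))
                               * mg_det n E ends (V2 - \<Union>(ends ` F)))"
proof -
  interpret bridged_partition V V1 V2 E ends n
    by (rule bridged_partition.intro) (use assms cross_edge_is_bridge[OF assms] in auto)
  have "{} \<notin> cross_matchings E ends V1 V2"
    unfolding cross_matchings_def by simp
  moreover have "finite (cross_matchings E ends V1 V2)"
    using finite_matchings unfolding matchings_def by simp
  ultimately show ?thesis
    unfolding mg_det_eq_sum_matchings matchings_def by simp
qed

end
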